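(* Let $G_1$ and $G_2$ be torsion-free groups such that: (i) in both $G_1$ and $G_2$, every subgroup commensurable to a product of two infinite groups is contained in a maximal product subgroup; (ii) in $G_1$, every maximal product subgroup $Q$ decomposes as $Q_1\times\cdots\times Q_s$ where each $Q_i$ either is infinite cyclic or admits an IMC generating set; (iii) in $G_2$, if two maximal product subgroups $P_1,P_2$ are such that $P_1\cap P_2$ has finite index in $P_1$, then $P_1=P_2$; (iv) $G_2$ has almost stable centralisers. If $G_1$ is a finite-index subgroup of $G_2$ and $P:=P_1\times\cdots\times P_s$ is a maximal product subgroup of $G_2$ such that $\mathrm{VZ}(P)=\{1\}$ and no $P_i$ is virtually a product of two infinite groups, then there exists a maximal product subgroup $R:=R_1\times\cdots\times R_s$ of $G_1$ such that each $R_i$ is a finite-index subgroup of $P_i$.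
   Context: A maximal product subgroup of a group is a maximal element (for inclusion) among subgroups decomposing as a direct product of two non-trivial groups. A group $G$ has almost stable centralisers if for all $g\in G$, $k\ge1$, $C(g)$ has finite index in $C(g^k)$. A subset $S\subset G$ is an IMC generating set if it generates $G$ and satisfies: (Independence) for all distinct $s_1,s_2\in S$ and integers $p,q\ge1$, $[s_1^p,s_2^q]\ne1$; (Maximal Centralisers) for all $s\in S$, $g\in G$, if $C(s)\subsetneq C(g)$ then $g=1$. The virtual centre $\mathrm{VZ}(G)$ is the set of elements centralising some finite-index subgroup of $G$. Commensurable means having isomorphic finite-index subgroups. *)

theory Defs
  imports "HOL-Algebra.Algebra"
begin

text \<open>Throughout, G is the ambient group (the paper's G2); subgroups of G are subsets
of its carrier. A subgroup X of G (e.g. G1) is treated as a group in its own right,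
and notions "in X" are relativised to subgroups contained in X.\<close>

definition torsion_free :: "'a monoid \<Rightarrow> bool" where
  "torsion_free G \<longleftrightarrow> (\<forall>x\<in>carrier G. \<forall>n::nat. n > 0 \<and> x [^]\<^bsub>G\<^esub> n = \<one>\<^bsub>G\<^esub> \<longrightarrow> x = \<one>\<^bsub>G\<^esub>)"

definition fin_idx :: "'a monoid \<Rightarrow> 'a set \<Rightarrow> 'a set \<Rightarrow> bool" where
  "fin_idx G K H \<longleftrightarrow> finite ((\<lambda>x. K #>\<^bsub>G\<^esub> x) ` H)"

fun int_dprod :: "'a monoid \<Rightarrow> 'a set list \<Rightarrow> 'a set \<Rightarrow> bool" where
  "int_dprod G [] Q \<longleftrightarrow> Q = {\<one>\<^bsub>G\<^esub>}"
| "int_dprod G (A # As) Q \<longleftrightarrow> (\<exists>B. int_dprod G As B \<and> subgroup A G \<and> subgroup B G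
      \<and> (\<forall>a\<in>A. \<forall>b\<in>B. a \<otimes>\<^bsub>G\<^esub> b = b \<otimes>\<^bsub>G\<^esub> a)
      \<and> A \<inter> B = {\<one>\<^bsub>G\<^esub>} \<and> Q = A <#>\<^bsub>G\<^esub> B)"

definition product_subgroup :: "'a monoid \<Rightarrow> 'a set \<Rightarrow> bool" where
  "product_subgroup G Q \<longleftrightarrow> subgroup Q G \<and>
     (\<exists>A B. A \<noteq> {\<one>\<^bsub>G\<^esub>} \<and> B \<noteq> {\<one>\<^bsub>G\<^esub>} \<and> int_dprod G [A, B] Q)"

definition max_prod_subgroup :: "'a monoid \<Rightarrow> 'a set \<Rightarrow> 'a set \<Rightarrow> bool" where
  "max_prod_subgroup G Amb Q \<longleftrightarrow> product_subgroup G Q \<and> Q \<subseteq> Amb \<and>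
     (\<forall>Q'. product_subgroup G Q' \<and> Q' \<subseteq> Amb \<and> Q \<subseteq> Q' \<longrightarrow> Q' = Q)"

definition commens_prod_inf :: "'a monoid \<Rightarrow> 'a set \<Rightarrow> bool" where
  "commens_prod_inf G K \<longleftrightarrow> (\<exists>(A::'a monoid) (B::'a monoid) K' Y.
     group A \<and> group B \<and> infinite (carrier A) \<and> infinite (carrier B) \<and>
     subgroup K' G \<and> K' \<subseteq> K \<and> fin_idx G K' K \<and>
     subgroup Y (A \<times>\<times> B) \<and> fin_idx (A \<times>\<times> B) Y (carrier (A \<times>\<times> B)) \<and>
     G\<lparr>carrier := K'\<rparr> \<cong> (A \<times>\<times> B)\<lparr>carrier := Y\<rparr>)"

definition virt_prod_inf :: "'a monoid \<Rightarrow> 'a set \<Rightarrow> bool" where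
  "virt_prod_inf G K \<longleftrightarrow> (\<exists>K' A B. subgroup K' G \<and> K' \<subseteq> K \<and> fin_idx G K' K \<and>
     infinite A \<and> infinite B \<and> int_dprod G [A, B] K')"

definition centr :: "'a monoid \<Rightarrow> 'a set \<Rightarrow> 'a \<Rightarrow> 'a set" where
  "centr G Q x = {y \<in> Q. y \<otimes>\<^bsub>G\<^esub> x = x \<otimes>\<^bsub>G\<^esub> y}"

definition almost_stable_centralisers :: "'a monoid \<Rightarrow> bool" where
  "almost_stable_centralisers G \<longleftrightarrow> (\<forall>g\<in>carrier G. \<forall>k::nat. k \<ge> 1 \<longrightarrow>
     fin_idx G (centr G (carrier G) g) (centr G (carrier G) (g [^]\<^bsub>G\<^esub> k)))"

definition IMC_gen_set :: "'a monoid \<Rightarrow> 'a set \<Rightarrow> 'a set \<Rightarrow> bool" where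
  "IMC_gen_set G Q S \<longleftrightarrow> S \<subseteq> Q \<and> generate G S = Q \<and>
     (\<forall>s1\<in>S. \<forall>s2\<in>S. s1 \<noteq> s2 \<longrightarrow> (\<forall>(p::nat) (q::nat). p \<ge> 1 \<and> q \<ge> 1 \<longrightarrow>
        s1 [^]\<^bsub>G\<^esub> p \<otimes>\<^bsub>G\<^esub> s2 [^]\<^bsub>G\<^esub> q \<noteq> s2 [^]\<^bsub>G\<^esub> q \<otimes>\<^bsub>G\<^esub> s1 [^]\<^bsub>G\<^esub> p)) \<and>
     (\<forall>s\<in>S. \<forall>g\<in>Q. centr G Q s \<subset> centr G Q g \<longrightarrow> g = \<one>\<^bsub>G\<^esub>)"

definition infinite_cyclic :: "'a monoid \<Rightarrow> 'a set \<Rightarrow> bool" where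
  "infinite_cyclic G Q \<longleftrightarrow> infinite Q \<and> (\<exists>x\<in>Q. Q = generate G {x})"

definition virtual_centre :: "'a monoid \<Rightarrow> 'a set \<Rightarrow> 'a set" where
  "virtual_centre G P = {x \<in> P. \<exists>K. subgroup K G \<and> K \<subseteq> P \<and> fin_idx G K P \<and>
     (\<forall>y\<in>K. x \<otimes>\<^bsub>G\<^esub> y = y \<otimes>\<^bsub>G\<^esub> x)}"

end

theory Submission
  imports Defs
begin

text \<open>
  Write \<open>P = A \<times> B\<close>. Intersecting \<open>A\<close> and \<open>B\<close> with the finite-index subgroup \<open>G\<^sub>1\<close> gives a
  finite-index subgroup of \<open>P\<close> inside \<open>G\<^sub>1\<close> that is a product of two infinite groups, so by (i)
  it lies in a maximal product subgroup \<open>Q\<close> of \<open>G\<^sub>1\<close>. Being a product of two infinite groups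
  itself, \<open>Q\<close> lies in a maximal product subgroup of \<open>G\<^sub>2\<close>, which by (iii) is \<open>P\<close>. Thus \<open>Q\<close>
  has finite index in \<open>P\<close>, and it is centreless because \<open>VZ(P)\<close> is trivial.

  The heart of the proof: for every splitting \<open>P = A \<times> B\<close>, a direct factor \<open>Y\<close> of \<open>Q\<close> that is
  infinite cyclic or has an IMC generating set lies in \<open>A\<close> or in \<open>B\<close>. Cyclic direct factors of a
  centreless group are trivial. If an IMC generator \<open>s = ab\<close> had both components nontrivial,
  some powers \<open>a\<^sup>m\<close>, \<open>b\<^sup>n\<close> would lie in \<open>Y\<close> with \<open>C\<^sub>Y(s) \<subseteq> C\<^sub>Y(a\<^sup>m), C\<^sub>Y(b\<^sup>n)\<close>; maximality of
  centralisers makes these equalities, so \<open>C\<^sub>Y(s)\<close> contains \<open>Y \<inter> A\<close> and \<open>Y \<inter> B\<close>, every generator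
  has a power commuting with \<open>s\<close>, independence leaves \<open>s\<close> as the only generator, and \<open>s\<close> would be
  central.

  Applied to \<open>P = P\<^sub>i \<times> (product of the other factors)\<close>, this shows that a factor of \<open>Q\<close>
  lying in no \<open>P\<^sub>i\<close> would centralise \<open>P\<close>, hence be trivial. So every factor of \<open>Q\<close> lies in
  some \<open>P\<^sub>i\<close>, and \<open>R\<^sub>i := Q \<inter> P\<^sub>i\<close> is the required decomposition.
\<close>

lemma mem_set_mult_iff: "x \<in> A <#>\<^bsub>G\<^esub> B \<longleftrightarrow> (\<exists>a\<in>A. \<exists>b\<in>B. x = a \<otimes>\<^bsub>G\<^esub> b)"
  by (auto simp: set_mult_def)

lemma finite_range_repeats:
  fixes f :: "nat \<Rightarrow> 'a"
  assumes "finite (range f)"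
  shows "\<exists>k l. k < l \<and> f k = f l"
proof (rule ccontr)
  assume "\<not> ?thesis"
  then have "inj f" by (intro linorder_injI) blast
  with assms have "finite (UNIV :: nat set)" by (rule finite_imageD)
  then show False by simp
qed

context group
begin

lemma set_mult_left_subset: "subgroup B G \<Longrightarrow> A \<subseteq> carrier G \<Longrightarrow> A \<subseteq> A <#> B"
  by (force simp: mem_set_mult_iff intro: subgroup.one_closed)

lemma set_mult_right_subset: "subgroup A G \<Longrightarrow> B \<subseteq> carrier G \<Longrightarrow> B \<subseteq> A <#> B"
  by (force simp: mem_set_mult_iff intro: subgroup.one_closed)

lemma set_mult_commuting:
  assumes "\<forall>a\<in>A. \<forall>b\<in>B. a \<otimes> b = b \<otimes> a"
  shows "A <#> B = B <#> A"
  using assms by (auto simp: mem_set_mult_iff; metis)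

lemma m_commute_middle:
  assumes "x \<in> carrier G" "y \<in> carrier G" "z \<in> carrier G" "w \<in> carrier G" "y \<otimes> z = z \<otimes> y"
  shows "(x \<otimes> y) \<otimes> (z \<otimes> w) = (x \<otimes> z) \<otimes> (y \<otimes> w)"
  using assms by (metis m_assoc m_closed)

lemma commute_mult:
  assumes "x \<in> carrier G" "y \<in> carrier G" "z \<in> carrier G" "x \<otimes> y = y \<otimes> x" "x \<otimes> z = z \<otimes> x"
  shows "x \<otimes> (y \<otimes> z) = (y \<otimes> z) \<otimes> x"
  using assms by (metis m_assoc)

lemma commute_mult_cancel:
  assumes "x \<in> carrier G" "y \<in> carrier G" "z \<in> carrier G"
    and "x \<otimes> (y \<otimes> z) = (y \<otimes> z) \<otimes> x" "x \<otimes> y = y \<otimes> x"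
  shows "x \<otimes> z = z \<otimes> x"
proof -
  have "y \<otimes> (x \<otimes> z) = y \<otimes> (z \<otimes> x)"
    using assms by (metis m_assoc)
  then show ?thesis using assms(1-3) by simp
qed

lemma subgroup_set_mult_commuting:
  assumes A: "subgroup A G" and B: "subgroup B G" and comm: "\<forall>a\<in>A. \<forall>b\<in>B. a \<otimes> b = b \<otimes> a"
  shows "subgroup (A <#> B) G"
proof (rule subgroupI)
  show "A <#> B \<subseteq> carrier G"
    using A B by (intro set_mult_closed subgroup.subset)
  show "A <#> B \<noteq> {}"
    using set_mult_left_subset[OF B subgroup.subset[OF A]] subgroup.one_closed[OF A] by blast
next
  fix x assume "x \<in> A <#> B"
  then obtain a b where ab: "a \<in> A" "b \<in> B" "x = a \<otimes> b" by (auto simp: mem_set_mult_iff)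
  then have "inv x = inv b \<otimes> inv a"
    using A B by (simp add: inv_mult_group subgroup.mem_carrier)
  also have "\<dots> = inv a \<otimes> inv b"
    using A B ab comm subgroup.m_inv_closed by metis
  finally show "inv x \<in> A <#> B"
    using A B ab by (auto simp: mem_set_mult_iff intro: subgroup.m_inv_closed)
next
  fix x y assume "x \<in> A <#> B" "y \<in> A <#> B"
  then obtain a b a' b' where ab: "a \<in> A" "b \<in> B" "x = a \<otimes> b" "a' \<in> A" "b' \<in> B" "y = a' \<otimes> b'"
    by (auto simp: mem_set_mult_iff)
  have carr: "a \<in> carrier G" "b \<in> carrier G" "a' \<in> carrier G" "b' \<in> carrier G"
    using A B ab by (auto intro: subgroup.mem_carrier)
  have "b \<otimes> a' = a' \<otimes> b"
    using ab comm by metis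
  then have "x \<otimes> y = (a \<otimes> a') \<otimes> (b \<otimes> b')"
    using ab(3,6) m_commute_middle[OF carr(1,2,3,4)] by simp
  then show "x \<otimes> y \<in> A <#> B"
    using A B ab by (auto simp: mem_set_mult_iff intro: subgroup.m_closed)
qed

lemma set_mult_cancel:
  assumes "subgroup A G" "subgroup B G" "A \<inter> B = {\<one>}"
    and "a \<in> A" "a' \<in> A" "b \<in> B" "b' \<in> B" "a \<otimes> b = a' \<otimes> b'"
  shows "a = a' \<and> b = b'"
proof -
  interpret group_disjoint_sum G A B
    using assms by (simp add: group_disjoint_sum_def is_group)
  show ?thesis
    using assms cancel by blast
qed

lemma pow_repeat_imp_pow_eq_one:
  assumes "x \<in> carrier G" "k < l" "x [^] (k::nat) = x [^] l"
  shows "x [^] (l - k) = \<one>"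
proof -
  have "x [^] k \<otimes> x [^] (l - k) = x [^] k"
    using assms nat_pow_mult[OF assms(1), of k "l - k"] by simp
  then show ?thesis using assms(1) by simp
qed

lemma subgroup_nat_pow_closed: "subgroup H G \<Longrightarrow> x \<in> H \<Longrightarrow> x [^] (n::nat) \<in> H"
  by (induction n) (simp_all add: subgroup.one_closed subgroup.m_closed)

end

text \<open>The notions of \<open>Defs\<close> are defined on plain monoids, while the locale \<open>group\<close> is
  stated for monoid schemes; this locale fixes the monoid type so that both can be combined.\<close>

locale plain_group = group G for G :: "'a monoid" (structure)

context plain_group
begin

section \<open>Internal direct products\<close>

lemma int_dprod_pair:
  "int_dprod G [A, B] Q \<longleftrightarrow> subgroup A G \<and> subgroup B G \<and> (\<forall>a\<in>A. \<forall>b\<in>B. a \<otimes> b = b \<otimes> a)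
      \<and> A \<inter> B = {\<one>} \<and> Q = A <#> B"
proof -
  have "B <#> {\<one>} = B" "B \<inter> {\<one>} = {\<one>}" if "subgroup B G" for B
    using that subgroup.one_closed by (auto simp: subgroup.subset simp flip: r_coset_eq_set_mult)
  then show ?thesis
    using triv_subgroup by (auto simp: subgroup.mem_carrier)
qed

lemma int_dprod_subgroup:
  "int_dprod G Us U \<Longrightarrow> subgroup U G \<and> (\<forall>V\<in>set Us. subgroup V G \<and> V \<subseteq> U)"
proof (induction Us arbitrary: U)
  case Nil
  then show ?case using triv_subgroup by simp
next
  case (Cons A As)
  then obtain B where B: "int_dprod G As B" "subgroup A G" "subgroup B G"
     "\<forall>a\<in>A. \<forall>b\<in>B. a \<otimes> b = b \<otimes> a" "U = A <#> B" by auto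
  have "A \<subseteq> U" "B \<subseteq> U"
    using B(5) set_mult_left_subset[OF B(3) subgroup.subset[OF B(2)]]
      set_mult_right_subset[OF B(2) subgroup.subset[OF B(3)]] by simp_all
  moreover have "subgroup U G"
    using B(2-5) by (simp add: subgroup_set_mult_commuting)
  ultimately show ?case
    using Cons.IH[OF B(1)] B(2) by auto
qed

lemma int_dprod_least:
  "int_dprod G Us U \<Longrightarrow> subgroup H G \<Longrightarrow> \<forall>V\<in>set Us. V \<subseteq> H \<Longrightarrow> U \<subseteq> H"
proof (induction Us arbitrary: U)
  case Nil
  then show ?case using subgroup.one_closed by auto
next
  case (Cons A As)
  then obtain W where W: "int_dprod G As W" "U = A <#> W" by auto
  have "A \<subseteq> H" "W \<subseteq> H"
    using Cons.prems Cons.IH[OF W(1)] by auto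
  then show ?case
    using W(2) subgroup.m_closed[OF Cons.prems(2)] by (auto simp: mem_set_mult_iff subset_iff)
qed

lemma direct_product_regroup:
  assumes A: "subgroup A G" and B: "subgroup B G" and AB: "\<forall>a\<in>A. \<forall>b\<in>B. a \<otimes> b = b \<otimes> a"
    and disjAB: "A \<inter> B = {\<one>}"
    and V: "subgroup V G" and W: "subgroup W G" and VW: "\<forall>v\<in>V. \<forall>w\<in>W. v \<otimes> w = w \<otimes> v"
    and disjVW: "V \<inter> W = {\<one>}" and B_eq: "B = V <#> W"
  shows "subgroup (A <#> W) G" "\<forall>v\<in>V. \<forall>x\<in>A <#> W. v \<otimes> x = x \<otimes> v"
    "V \<inter> (A <#> W) = {\<one>}" "A <#> B = V <#> (A <#> W)"
proof -
  have carr: "A \<subseteq> carrier G" "V \<subseteq> carrier G" "W \<subseteq> carrier G"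
    using A V W by (simp_all add: subgroup.subset)
  have VB: "V \<subseteq> B" and WB: "W \<subseteq> B"
    using B_eq set_mult_left_subset[OF W carr(2)] set_mult_right_subset[OF V carr(3)] by simp_all
  show AW: "subgroup (A <#> W) G"
    using A W AB WB by (intro subgroup_set_mult_commuting) auto
  show "\<forall>v\<in>V. \<forall>x\<in>A <#> W. v \<otimes> x = x \<otimes> v"
  proof (intro ballI)
    fix v x assume v: "v \<in> V" and "x \<in> A <#> W"
    then obtain a w where aw: "a \<in> A" "w \<in> W" "x = a \<otimes> w" by (auto simp: mem_set_mult_iff)
    have "v \<otimes> a = a \<otimes> v"
      using AB VB v aw(1) by (metis subsetD)
    moreover have "v \<otimes> w = w \<otimes> v"
      using VW v aw(2) by blast
    ultimately show "v \<otimes> x = x \<otimes> v"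
      using v aw carr by (simp add: commute_mult subsetD)
  qed
  show "V \<inter> (A <#> W) = {\<one>}"
  proof
    show "V \<inter> (A <#> W) \<subseteq> {\<one>}"
    proof
      fix x assume x: "x \<in> V \<inter> (A <#> W)"
      then obtain a w where aw: "a \<in> A" "w \<in> W" "x = a \<otimes> w" by (auto simp: mem_set_mult_iff)
      have "x \<in> carrier G" "w \<in> carrier G" using x aw(2) carr by auto
      then have "\<one> \<otimes> x = a \<otimes> w" using aw(3) by simp
      then have "\<one> = a \<and> x = w"
        using set_mult_cancel[OF A B disjAB subgroup.one_closed[OF A] aw(1)] x aw(2) VB WB by blast
      then show "x \<in> {\<one>}" using x aw(2) disjVW by auto
    qed
    show "{\<one>} \<subseteq> V \<inter> (A <#> W)"
      using subgroup.one_closed[OF V] subgroup.one_closed[OF AW] by blast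
  qed
  have "A <#> B = (A <#> V) <#> W" using B_eq set_mult_assoc[OF carr] by simp
  also have "A <#> V = V <#> A" using AB VB by (intro set_mult_commuting) blast
  finally show "A <#> B = V <#> (A <#> W)" using set_mult_assoc[OF carr(2,1,3)] by simp
qed

lemma int_dprod_complement:
  "int_dprod G Us U \<Longrightarrow> V \<in> set Us \<Longrightarrow> \<exists>W. subgroup W G \<and> (\<forall>v\<in>V. \<forall>w\<in>W. v \<otimes> w = w \<otimes> v)
     \<and> V \<inter> W = {\<one>} \<and> U = V <#> W"
proof (induction Us arbitrary: U)
  case Nil
  then show ?case by simp
next
  case (Cons A As)
  from Cons.prems(1) obtain B where B: "int_dprod G As B" "subgroup A G" "subgroup B G"
     "\<forall>a\<in>A. \<forall>b\<in>B. a \<otimes> b = b \<otimes> a" "A \<inter> B = {\<one>}" "U = A <#> B" by auto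
  show ?case
  proof (cases "V = A")
    case True
    then show ?thesis using B by blast
  next
    case False
    then have V: "V \<in> set As" using Cons.prems by auto
    then obtain W where W: "subgroup W G" "\<forall>v\<in>V. \<forall>w\<in>W. v \<otimes> w = w \<otimes> v" "V \<inter> W = {\<one>}" "B = V <#> W"
      using Cons.IH[OF B(1)] by blast
    have "subgroup V G" using int_dprod_subgroup[OF B(1)] V by blast
    from direct_product_regroup[OF B(2-5) this W] show ?thesis
      using B(6) by blast
  qed
qed

lemma Int_direct_product_split:
  assumes A: "subgroup A G" and W: "subgroup W G" and AW: "\<forall>a\<in>A. \<forall>w\<in>W. a \<otimes> w = w \<otimes> a"
    and disj: "A \<inter> W = {\<one>}" and Q: "subgroup Q G" and UW: "U \<subseteq> W"
    and gen: "Q \<subseteq> generate G (Q \<inter> (A \<union> U))"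
  shows "Q = (Q \<inter> A) <#> (Q \<inter> W)" and "Q \<inter> W \<subseteq> generate G (Q \<inter> W \<inter> U)"
proof -
  have QA: "subgroup (Q \<inter> A) G" and QW: "subgroup (Q \<inter> W) G"
    using Q A W by (simp_all add: subgroups_Inter_pair)
  have gen_subset: "Q \<subseteq> Q \<inter> A <#> K" if K: "subgroup K G" "K \<subseteq> W" "Q \<inter> U \<subseteq> K" for K
  proof -
    have "subgroup (Q \<inter> A <#> K) G"
      using QA K(1,2) AW by (intro subgroup_set_mult_commuting) auto
    moreover have "Q \<inter> (A \<union> U) \<subseteq> Q \<inter> A <#> K"
      using set_mult_left_subset[OF K(1) subgroup.subset[OF QA]]
        set_mult_right_subset[OF QA subgroup.subset[OF K(1)]] K(3) by blast
    ultimately show ?thesis using gen generate_subgroup_incl by blast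
  qed
  show "Q = (Q \<inter> A) <#> (Q \<inter> W)"
  proof
    show "(Q \<inter> A) <#> (Q \<inter> W) \<subseteq> Q"
      using subgroup.m_closed[OF Q] by (auto simp: mem_set_mult_iff)
    show "Q \<subseteq> (Q \<inter> A) <#> (Q \<inter> W)"
      using gen_subset[OF QW] UW by blast
  qed
  show "Q \<inter> W \<subseteq> generate G (Q \<inter> W \<inter> U)" (is "_ \<subseteq> ?K")
  proof
    fix q assume q: "q \<in> Q \<inter> W"
    have K: "subgroup ?K G"
      using subgroup.subset[OF QW] by (intro generate_is_subgroup) blast
    have KW: "?K \<subseteq> W"
      by (rule generate_subgroup_incl[OF _ W]) blast
    have "Q \<inter> U \<subseteq> ?K"
      using UW generate.incl[of _ "Q \<inter> W \<inter> U" G] by blast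
    then have "q \<in> (Q \<inter> A) <#> ?K"
      using gen_subset[OF K KW] q by blast
    then obtain a k where ak: "a \<in> Q \<inter> A" "k \<in> ?K" "q = a \<otimes> k"
      unfolding mem_set_mult_iff by blast
    have "\<one> \<otimes> q = a \<otimes> k"
      using ak(3) q subgroup.mem_carrier[OF W] by simp
    then have "q = k"
      using set_mult_cancel[OF A W disj subgroup.one_closed[OF A]] ak(1,2) KW q by blast
    then show "q \<in> ?K" using ak(2) by simp
  qed
qed

lemma int_dprod_restrict:
  "int_dprod G Ps P \<Longrightarrow> subgroup Q G \<Longrightarrow> Q \<subseteq> P \<Longrightarrow> Q \<subseteq> generate G (Q \<inter> \<Union>(set Ps)) \<Longrightarrow>
   int_dprod G (map (\<lambda>Z. Q \<inter> Z) Ps) Q"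
proof (induction Ps arbitrary: P Q)
  case Nil
  then show ?case using subgroup.one_closed[OF Nil.prems(2)] by auto
next
  case (Cons A As)
  from Cons.prems(1) obtain W where W: "int_dprod G As W" "subgroup A G" "subgroup W G"
     "\<forall>a\<in>A. \<forall>b\<in>W. a \<otimes> b = b \<otimes> a" "A \<inter> W = {\<one>}" "P = A <#> W" by auto
  have sQ: "subgroup Q G" by fact
  have UW: "\<Union>(set As) \<subseteq> W" using int_dprod_subgroup[OF W(1)] by blast
  note split = Int_direct_product_split[OF W(2-5) sQ UW]
  have "int_dprod G (map (\<lambda>Z. (Q \<inter> W) \<inter> Z) As) (Q \<inter> W)"
    using Cons.IH[OF W(1) subgroups_Inter_pair[OF sQ W(3)] _ split(2)] Cons.prems(4) by auto
  moreover have "map (\<lambda>Z. (Q \<inter> W) \<inter> Z) As = map (\<lambda>Z. Q \<inter> Z) As"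
    using UW by auto
  ultimately have "int_dprod G (map (\<lambda>Z. Q \<inter> Z) As) (Q \<inter> W)"
    by metis
  moreover have "Q \<inter> A \<inter> (Q \<inter> W) = {\<one>}"
    using W(5) subgroup.one_closed[OF sQ] by blast
  moreover have "\<forall>a\<in>Q \<inter> A. \<forall>b\<in>Q \<inter> W. a \<otimes> b = b \<otimes> a"
    using W(4) by blast
  ultimately show ?case
    using split(1) Cons.prems(4) subgroups_Inter_pair[OF sQ W(2)] subgroups_Inter_pair[OF sQ W(3)]
    by (simp only: list.map int_dprod.simps) auto
qed

lemma int_dprod_Int_factors:
  assumes P: "int_dprod G Ps P" and Q: "int_dprod G Qs Q" and QP: "Q \<subseteq> P"
    and refine: "\<forall>Y\<in>set Qs. \<exists>Z\<in>set Ps. Y \<subseteq> Z"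
  shows "int_dprod G (map (\<lambda>Z. Q \<inter> Z) Ps) Q"
proof (rule int_dprod_restrict[OF P _ QP])
  show sQ: "subgroup Q G"
    using int_dprod_subgroup[OF Q] by (rule conjunct1)
  show "Q \<subseteq> generate G (Q \<inter> \<Union>(set Ps))"
  proof (rule int_dprod_least[OF Q])
    show "subgroup (generate G (Q \<inter> \<Union>(set Ps))) G"
      using subgroup.subset[OF sQ] by (intro generate_is_subgroup) blast
    show "\<forall>Y\<in>set Qs. Y \<subseteq> generate G (Q \<inter> \<Union>(set Ps))"
    proof
      fix Y assume Y: "Y \<in> set Qs"
      then obtain Z where "Z \<in> set Ps" "Y \<subseteq> Z" using refine by blast
      moreover have "Y \<subseteq> Q" using int_dprod_subgroup[OF Q] Y by blast
      ultimately have "Y \<subseteq> Q \<inter> \<Union>(set Ps)" by blast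
      then show "Y \<subseteq> generate G (Q \<inter> \<Union>(set Ps))"
        using generate.incl[of _ "Q \<inter> \<Union>(set Ps)" G] by blast
    qed
  qed
qed

section \<open>Torsion and finite index\<close>

lemma torsion_free_pow_eq_one_iff:
  "torsion_free G \<Longrightarrow> x \<in> carrier G \<Longrightarrow> 0 < n \<Longrightarrow> x [^] (n::nat) = \<one> \<longleftrightarrow> x = \<one>"
  unfolding torsion_free_def by auto

lemma torsion_free_subgroup_infinite:
  assumes tf: "torsion_free G" and V: "subgroup V G" and nontriv: "V \<noteq> {\<one>}"
  shows "infinite V"
proof
  assume "finite V"
  obtain x where x: "x \<in> V" "x \<noteq> \<one>" using nontriv subgroup.one_closed[OF V] by blast
  have xc: "x \<in> carrier G" using subgroup.mem_carrier[OF V x(1)] .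
  have "range (\<lambda>n::nat. x [^] n) \<subseteq> V"
    using subgroup_nat_pow_closed[OF V x(1)] by blast
  then have "finite (range (\<lambda>n::nat. x [^] n))"
    using \<open>finite V\<close> by (rule finite_subset)
  then obtain k l :: nat where "k < l" "x [^] k = x [^] l"
    using finite_range_repeats by blast
  with xc have "x [^] (l - k) = \<one>"
    by (rule pow_repeat_imp_pow_eq_one)
  then show False
    using torsion_free_pow_eq_one_iff[OF tf xc] x(2) \<open>k < l\<close> by simp
qed

lemma fin_idx_self:
  assumes "subgroup K G"
  shows "fin_idx G K K"
proof -
  have "(\<lambda>x. K #> x) ` K \<subseteq> {K}"
    using subgroup.rcos_const[OF assms is_group] by auto
  then show ?thesis unfolding fin_idx_def by (rule finite_subset) simp
qed

lemma fin_idx_pow_mem: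
  assumes K: "subgroup K G" and H: "subgroup H G" and fin: "fin_idx G K H" and x: "x \<in> H"
  shows "\<exists>m::nat. 0 < m \<and> x [^] m \<in> K"
proof -
  have xc: "x \<in> carrier G" using subgroup.mem_carrier[OF H x] .
  have "range (\<lambda>n::nat. K #> x [^] n) \<subseteq> (\<lambda>y. K #> y) ` H"
    using subgroup_nat_pow_closed[OF H x] by blast
  then have "finite (range (\<lambda>n::nat. K #> x [^] n))"
    using fin unfolding fin_idx_def by (rule finite_subset)
  then obtain k l :: nat where kl: "k < l" "K #> x [^] k = K #> x [^] l"
    using finite_range_repeats by blast
  then have "x [^] l \<in> K #> x [^] k"
    using rcos_self[OF nat_pow_closed[OF xc] K] by simp
  then have "x [^] l \<otimes> inv (x [^] k) \<in> K"
    using subgroup.rcos_module_imp[OF K is_group] xc by simp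
  moreover have "x [^] l \<otimes> inv (x [^] k) = x [^] (l - k)"
  proof -
    have "x [^] l = x [^] (l - k) \<otimes> x [^] k"
      using xc kl(1) by (simp add: nat_pow_mult)
    then show ?thesis using xc by (simp add: m_assoc)
  qed
  ultimately show ?thesis using kl(1) by (intro exI[of _ "l - k"]) auto
qed

lemma fin_idx_mono:
  assumes K: "subgroup K G" and L: "subgroup L G" and KL: "K \<subseteq> L" and V: "V \<subseteq> carrier G"
    and fin: "fin_idx G K V"
  shows "fin_idx G L V"
proof -
  have carr: "K \<subseteq> carrier G" "L \<subseteq> carrier G"
    using K L subgroup.subset by blast+
  have "L <#> K = L"
    using set_mult_left_subset[OF K carr(2)] KL subgroup.m_closed[OF L] by (auto simp: mem_set_mult_iff subset_iff)
  then have "L #> x = L <#> (K #> x)" if "x \<in> V" for x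
    using that V carr by (simp add: r_coset_eq_set_mult set_mult_assoc[symmetric] subsetD)
  then have "(\<lambda>x. L #> x) ` V = (\<lambda>C. L <#> C) ` ((\<lambda>x. K #> x) ` V)"
    by (auto simp: image_image cong: image_cong)
  then show ?thesis using fin unfolding fin_idx_def by simp
qed

lemma fin_idx_Int:
  assumes K: "subgroup K G" and V: "subgroup V G" and VH: "V \<subseteq> H" and fin: "fin_idx G K H"
  shows "fin_idx G (K \<inter> V) V"
proof -
  have "(K \<inter> V) #> x = (K #> x) \<inter> V" if x: "x \<in> V" for x
  proof
    show "(K \<inter> V) #> x \<subseteq> (K #> x) \<inter> V"
      using x subgroup.m_closed[OF V] unfolding r_coset_def by auto
    show "(K #> x) \<inter> V \<subseteq> (K \<inter> V) #> x"
    proof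
      fix y assume y: "y \<in> (K #> x) \<inter> V"
      then obtain k where k: "k \<in> K" "y = k \<otimes> x" unfolding r_coset_def by auto
      have "k = y \<otimes> inv x"
        using k subgroup.mem_carrier[OF K] subgroup.mem_carrier[OF V x] by (simp add: m_assoc)
      also have "\<dots> \<in> V"
        using x y subgroup.m_closed[OF V] subgroup.m_inv_closed[OF V] by blast
      finally show "y \<in> (K \<inter> V) #> x" using k unfolding r_coset_def by auto
    qed
  qed
  then have "(\<lambda>x. (K \<inter> V) #> x) ` V = (\<lambda>C. C \<inter> V) ` ((\<lambda>x. K #> x) ` V)"
    by (auto simp: image_image cong: image_cong)
  moreover have "finite ((\<lambda>x. K #> x) ` V)"
    using fin VH finite_subset[OF image_mono] unfolding fin_idx_def by blast
  ultimately show ?thesis unfolding fin_idx_def by simp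
qed

lemma fin_idx_infinite:
  assumes K: "subgroup K G" and H: "H \<subseteq> carrier G" and fin: "fin_idx G K H" and inf: "infinite H"
  shows "infinite K"
proof
  assume "finite K"
  then have cosets_finite: "finite (K #> x)" for x
    unfolding r_coset_def by simp
  have "H \<subseteq> \<Union>((\<lambda>x. K #> x) ` H)"
    using rcos_self[OF _ K] H by blast
  moreover have "finite (\<Union>((\<lambda>x. K #> x) ` H))"
    using fin cosets_finite unfolding fin_idx_def by (intro finite_Union) auto
  ultimately have "finite H"
    by (rule finite_subset)
  then show False using inf by simp
qed

lemma fin_idx_set_mult:
  assumes A: "subgroup A G" and B: "subgroup B G" and A': "subgroup A' G" and B': "subgroup B' G"
    and sub: "A' \<subseteq> A" "B' \<subseteq> B" and comm: "\<forall>a\<in>A. \<forall>b\<in>B. a \<otimes> b = b \<otimes> a"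
    and finA: "fin_idx G A' A" and finB: "fin_idx G B' B"
  shows "fin_idx G (A' <#> B') (A <#> B)"
proof -
  have carr: "A' \<subseteq> carrier G" "B' \<subseteq> carrier G"
    using A' B' subgroup.subset by blast+
  have coset: "(A' <#> B') #> (a \<otimes> b) = (A' #> a) <#> (B' #> b)" if ab: "a \<in> A" "b \<in> B" for a b
  proof -
    have ac: "a \<in> carrier G" "b \<in> carrier G"
      using subgroup.mem_carrier[OF A ab(1)] subgroup.mem_carrier[OF B ab(2)] .
    have "B' <#> {a} = {a} <#> B'"
      using comm ab(1) sub(2) by (auto simp: mem_set_mult_iff subset_iff)
    then have "B' <#> ({a} <#> {b}) = {a} <#> (B' <#> {b})"
      using carr ac by (simp flip: set_mult_assoc)
    moreover have "{a \<otimes> b} = {a} <#> {b}"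
      by (simp add: set_mult_def)
    moreover have "{a} \<subseteq> carrier G" "{b} \<subseteq> carrier G"
      using ac by simp_all
    ultimately show ?thesis
      using carr by (simp add: r_coset_eq_set_mult set_mult_assoc set_mult_closed)
  qed
  have "(\<lambda>x. (A' <#> B') #> x) ` (A <#> B)
        \<subseteq> (\<lambda>(C, D). C <#> D) ` (((\<lambda>x. A' #> x) ` A) \<times> ((\<lambda>x. B' #> x) ` B))"
  proof
    fix y assume "y \<in> (\<lambda>x. (A' <#> B') #> x) ` (A <#> B)"
    then obtain a b where ab: "a \<in> A" "b \<in> B" "y = (A' <#> B') #> (a \<otimes> b)"
      by (auto simp: mem_set_mult_iff)
    then show "y \<in> (\<lambda>(C, D). C <#> D) ` (((\<lambda>x. A' #> x) ` A) \<times> ((\<lambda>x. B' #> x) ` B))"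
      using coset by (auto intro!: image_eqI[of _ _ "(A' #> a, B' #> b)"])
  qed
  moreover have "finite (((\<lambda>x. A' #> x) ` A) \<times> ((\<lambda>x. B' #> x) ` B))"
    using finA finB unfolding fin_idx_def by simp
  ultimately show ?thesis
    unfolding fin_idx_def by (meson finite_imageI finite_subset)
qed

section \<open>Products of infinite groups\<close>

lemma DirProd_iso_set_mult:
  assumes A: "subgroup A G" and B: "subgroup B G" and comm: "\<forall>a\<in>A. \<forall>b\<in>B. a \<otimes> b = b \<otimes> a"
    and disj: "A \<inter> B = {\<one>}"
  shows "G\<lparr>carrier := A\<rparr> \<times>\<times> G\<lparr>carrier := B\<rparr> \<cong> G\<lparr>carrier := A <#> B\<rparr>"
proof -
  let ?h = "\<lambda>p. fst p \<otimes> snd p"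
  have "?h \<in> hom (G\<lparr>carrier := A\<rparr> \<times>\<times> G\<lparr>carrier := B\<rparr>) (G\<lparr>carrier := A <#> B\<rparr>)"
  proof (rule homI)
    fix x y
    assume "x \<in> carrier (G\<lparr>carrier := A\<rparr> \<times>\<times> G\<lparr>carrier := B\<rparr>)"
      and "y \<in> carrier (G\<lparr>carrier := A\<rparr> \<times>\<times> G\<lparr>carrier := B\<rparr>)"
    then obtain a b a' b' where ab: "x = (a, b)" "y = (a', b')" "a \<in> A" "b \<in> B" "a' \<in> A" "b' \<in> B"
      by auto
    have "b \<otimes> a' = a' \<otimes> b" using comm ab by metis
    then show "?h (x \<otimes>\<^bsub>G\<lparr>carrier := A\<rparr> \<times>\<times> G\<lparr>carrier := B\<rparr>\<^esub> y) = ?h x \<otimes>\<^bsub>G\<lparr>carrier := A <#> B\<rparr>\<^esub> ?h y"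
      using ab A B by (simp add: m_commute_middle subgroup.mem_carrier)
  qed (auto simp: mem_set_mult_iff; blast)
  moreover have "?h ` (A \<times> B) = A <#> B"
    by (force simp: mem_set_mult_iff)
  moreover have "inj_on ?h (A \<times> B)"
    using set_mult_cancel[OF A B disj] by (auto simp: inj_on_def)
  ultimately have "?h \<in> iso (G\<lparr>carrier := A\<rparr> \<times>\<times> G\<lparr>carrier := B\<rparr>) (G\<lparr>carrier := A <#> B\<rparr>)"
    by (simp add: iso_def bij_betw_def)
  then show ?thesis unfolding is_iso_def by blast
qed

lemma commens_prod_infI:
  assumes K: "int_dprod G [A, B] K" and inf: "infinite A" "infinite B"
  shows "commens_prod_inf G K"
proof -
  have A: "subgroup A G" and B: "subgroup B G" and comm: "\<forall>a\<in>A. \<forall>b\<in>B. a \<otimes> b = b \<otimes> a"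
    and disj: "A \<inter> B = {\<one>}" and KAB: "K = A <#> B"
    using K unfolding int_dprod_pair by auto
  let ?D = "G\<lparr>carrier := A\<rparr> \<times>\<times> G\<lparr>carrier := B\<rparr>"
  have grpA: "group (G\<lparr>carrier := A\<rparr>)" and grpB: "group (G\<lparr>carrier := B\<rparr>)"
    using A B by (simp_all add: subgroup.subgroup_is_group)
  then have grpD: "group ?D" by (rule DirProd_group)
  then have "fin_idx ?D (carrier ?D) (carrier ?D)"
    by (intro plain_group.fin_idx_self plain_group.intro group.subgroup_self)
  moreover have "?D\<lparr>carrier := carrier ?D\<rparr> = ?D"
    by (simp add: DirProd_def)
  then have "G\<lparr>carrier := K\<rparr> \<cong> ?D\<lparr>carrier := carrier ?D\<rparr>"
    unfolding KAB using group.iso_sym[OF grpD DirProd_iso_set_mult[OF A B comm disj]] by (simp only:)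
  moreover have "subgroup K G"
    using int_dprod_subgroup[OF K] by blast
  ultimately show ?thesis
    unfolding commens_prod_inf_def using grpA grpB inf fin_idx_self group.subgroup_self[OF grpD]
    by (intro exI[of _ "G\<lparr>carrier := A\<rparr>"] exI[of _ "G\<lparr>carrier := B\<rparr>"] exI[of _ K]
        exI[of _ "carrier ?D"]) auto
qed

lemma product_subgroup_nontrivial_factors:
  assumes "product_subgroup G P"
  obtains A B where "A \<noteq> {\<one>}" "B \<noteq> {\<one>}" "subgroup A G" "subgroup B G"
    "\<forall>a\<in>A. \<forall>b\<in>B. a \<otimes> b = b \<otimes> a" "A \<inter> B = {\<one>}" "P = A <#> B"
  using assms unfolding product_subgroup_def int_dprod_pair by blast

lemma product_subgroup_nontrivial:
  assumes "product_subgroup G P"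
  shows "P \<noteq> {\<one>}"
proof -
  obtain A B where AB: "A \<noteq> {\<one>}" "subgroup A G" "subgroup B G" "P = A <#> B"
    using assms by (rule product_subgroup_nontrivial_factors)
  then have "A \<subseteq> P"
    using set_mult_left_subset[OF AB(3) subgroup.subset[OF AB(2)]] by simp
  then show ?thesis
    using AB(1) subgroup.one_closed[OF AB(2)] by blast
qed

lemma torsion_free_product_subgroup_commens_prod_inf:
  assumes tf: "torsion_free G" and P: "product_subgroup G P"
  shows "commens_prod_inf G P"
proof -
  obtain A B where AB: "A \<noteq> {\<one>}" "B \<noteq> {\<one>}" and "int_dprod G [A, B] P"
    using P unfolding product_subgroup_def by blast
  moreover have "subgroup A G" "subgroup B G"
    using \<open>int_dprod G [A, B] P\<close> unfolding int_dprod_pair by auto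
  ultimately show ?thesis
    using torsion_free_subgroup_infinite[OF tf] by (blast intro: commens_prod_infI)
qed

lemma product_subgroup_fin_idx_commens_prod_inf:
  assumes tf: "torsion_free G" and G1: "subgroup G1 G" and fin: "fin_idx G G1 (carrier G)"
    and P: "product_subgroup G P"
  shows "\<exists>K. subgroup K G \<and> K \<subseteq> G1 \<and> K \<subseteq> P \<and> fin_idx G K P \<and> commens_prod_inf G K"
proof -
  obtain A B where nontriv: "A \<noteq> {\<one>}" "B \<noteq> {\<one>}" and A: "subgroup A G" and B: "subgroup B G"
    and comm: "\<forall>a\<in>A. \<forall>b\<in>B. a \<otimes> b = b \<otimes> a" and disj: "A \<inter> B = {\<one>}" and PAB: "P = A <#> B"
    using P by (rule product_subgroup_nontrivial_factors)
  have G1_Int: "subgroup (G1 \<inter> V) G \<and> fin_idx G (G1 \<inter> V) V \<and> infinite (G1 \<inter> V)"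
    if V: "subgroup V G" "V \<noteq> {\<one>}" for V
  proof -
    have "subgroup (G1 \<inter> V) G" using G1 V(1) by (rule subgroups_Inter_pair)
    moreover have "fin_idx G (G1 \<inter> V) V"
      using fin_idx_Int[OF G1 V(1) subgroup.subset[OF V(1)] fin] .
    moreover have "infinite (G1 \<inter> V)"
      using fin_idx_infinite[OF _ subgroup.subset[OF V(1)]] torsion_free_subgroup_infinite[OF tf V]
        calculation by blast
    ultimately show ?thesis by blast
  qed
  let ?A = "G1 \<inter> A" and ?B = "G1 \<inter> B"
  have A': "subgroup ?A G" "fin_idx G ?A A" "infinite ?A" and B': "subgroup ?B G" "fin_idx G ?B B" "infinite ?B"
    using G1_Int[OF A nontriv(1)] G1_Int[OF B nontriv(2)] by auto
  have "int_dprod G [?A, ?B] (?A <#> ?B)"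
    unfolding int_dprod_pair using A'(1) B'(1) comm disj subgroup.one_closed[OF G1] by auto
  then have "commens_prod_inf G (?A <#> ?B)"
    using A'(3) B'(3) by (rule commens_prod_infI)
  moreover have "subgroup (?A <#> ?B) G" "?A <#> ?B \<subseteq> G1"
    using subgroup_set_mult_commuting[OF A'(1) B'(1)] comm subgroup.m_closed[OF G1]
    by (auto simp: mem_set_mult_iff)
  moreover have "?A <#> ?B \<subseteq> P"
    unfolding PAB by (intro mono_set_mult) auto
  moreover have "fin_idx G (?A <#> ?B) P"
    unfolding PAB using A B A'(1,2) B'(1,2) comm by (intro fin_idx_set_mult) auto
  ultimately show ?thesis by blast
qed

lemma exists_fin_idx_max_prod_subgroup:
  assumes tf: "torsion_free G" and G1: "subgroup G1 G" and fin: "fin_idx G G1 (carrier G)"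
    and max1: "\<forall>K. subgroup K G \<and> K \<subseteq> G1 \<and> commens_prod_inf G K \<longrightarrow>
               (\<exists>Q. max_prod_subgroup G G1 Q \<and> K \<subseteq> Q)"
    and max2: "\<forall>K. subgroup K G \<and> commens_prod_inf G K \<longrightarrow>
               (\<exists>Q. max_prod_subgroup G (carrier G) Q \<and> K \<subseteq> Q)"
    and rigid: "\<forall>P1 P2. max_prod_subgroup G (carrier G) P1 \<and> max_prod_subgroup G (carrier G) P2
               \<and> fin_idx G (P1 \<inter> P2) P1 \<longrightarrow> P1 = P2"
    and P: "max_prod_subgroup G (carrier G) P"
  shows "\<exists>Q. max_prod_subgroup G G1 Q \<and> Q \<subseteq> P \<and> fin_idx G Q P"
proof -
  have sP: "subgroup P G" and prodP: "product_subgroup G P"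
    using P unfolding max_prod_subgroup_def product_subgroup_def by blast+
  obtain K where K: "subgroup K G" "K \<subseteq> G1" "K \<subseteq> P" "fin_idx G K P" "commens_prod_inf G K"
    using product_subgroup_fin_idx_commens_prod_inf[OF tf G1 fin prodP] by blast
  obtain Q where Q: "max_prod_subgroup G G1 Q" "K \<subseteq> Q"
    using max1 K by blast
  have sQ: "subgroup Q G" and prodQ: "product_subgroup G Q"
    using Q(1) unfolding max_prod_subgroup_def product_subgroup_def by blast+
  obtain P' where P': "max_prod_subgroup G (carrier G) P'" "Q \<subseteq> P'"
    using max2 sQ torsion_free_product_subgroup_commens_prod_inf[OF tf prodQ] by blast
  have sP': "subgroup P' G"
    using P'(1) unfolding max_prod_subgroup_def product_subgroup_def by blast
  have "fin_idx G (P \<inter> P') P"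
    using fin_idx_mono[OF K(1) subgroups_Inter_pair[OF sP sP'] _ subgroup.subset[OF sP] K(4)]
      K(3) Q(2) P'(2) by blast
  then have "P' = P" using rigid P P'(1) by blast
  then have "Q \<subseteq> P" using P'(2) by simp
  moreover have "fin_idx G Q P"
    using fin_idx_mono[OF K(1) sQ Q(2) subgroup.subset[OF sP] K(4)] .
  ultimately show ?thesis using Q(1) by blast
qed

section \<open>Direct factors of a centreless subgroup of a product\<close>

lemma centr_subgroup:
  assumes H: "subgroup H G" and x: "x \<in> carrier G"
  shows "subgroup (centr G H x) G"
proof (rule subgroupI)
  show "centr G H x \<subseteq> carrier G" "centr G H x \<noteq> {}"
    using H x subgroup.subset subgroup.one_closed unfolding centr_def by fastforce+
next
  fix y assume "y \<in> centr G H x"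
  then have y: "y \<in> H" "y \<in> carrier G" "y \<otimes> x = x \<otimes> y"
    using subgroup.mem_carrier[OF H] unfolding centr_def by auto
  have "x \<otimes> inv y = inv y \<otimes> (y \<otimes> x) \<otimes> inv y"
    using x y(2) by (simp add: m_assoc[symmetric])
  also have "\<dots> = inv y \<otimes> x"
    using x y(2,3) by (simp add: m_assoc)
  finally have "inv y \<otimes> x = x \<otimes> inv y" by simp
  then show "inv y \<in> centr G H x"
    using subgroup.m_inv_closed[OF H y(1)] unfolding centr_def by simp
next
  fix y z assume "y \<in> centr G H x" "z \<in> centr G H x"
  then have "y \<in> H" "z \<in> H" "y \<in> carrier G" "z \<in> carrier G" "y \<otimes> x = x \<otimes> y" "z \<otimes> x = x \<otimes> z"
    using subgroup.mem_carrier[OF H] unfolding centr_def by auto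
  then show "y \<otimes> z \<in> centr G H x"
    using x subgroup.m_closed[OF H] unfolding centr_def by (simp add: commute_mult)
qed

lemma IMC_generator_central:
  assumes S: "IMC_gen_set G H S" and H: "subgroup H G" and s: "s \<in> S"
    and powers: "\<forall>s'\<in>S. \<exists>k::nat. 0 < k \<and> s' [^] k \<otimes> s = s \<otimes> s' [^] k"
  shows "\<forall>h\<in>H. h \<otimes> s = s \<otimes> h"
proof -
  have SH: "S \<subseteq> H" and gen: "generate G S = H"
    and indep: "\<forall>s1\<in>S. \<forall>s2\<in>S. s1 \<noteq> s2 \<longrightarrow> (\<forall>(p::nat) (q::nat). p \<ge> 1 \<and> q \<ge> 1 \<longrightarrow>
        s1 [^] p \<otimes> s2 [^] q \<noteq> s2 [^] q \<otimes> s1 [^] p)"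
    using S unfolding IMC_gen_set_def by blast+
  have sc: "s \<in> carrier G" using subgroup.mem_carrier[OF H] s SH by blast
  have "S \<subseteq> {s}"
  proof
    fix s' assume s': "s' \<in> S"
    obtain k :: nat where k: "0 < k" "s' [^] k \<otimes> s = s \<otimes> s' [^] k"
      using powers s' by blast
    moreover have "s' [^] k \<otimes> s [^] (1::nat) \<noteq> s [^] (1::nat) \<otimes> s' [^] k" if "s' \<noteq> s"
    proof -
      have "k \<ge> 1 \<and> (1::nat) \<ge> 1 \<longrightarrow> s' [^] k \<otimes> s [^] (1::nat) \<noteq> s [^] (1::nat) \<otimes> s' [^] k"
        using indep s' s that by blast
      then show ?thesis using k(1) by simp
    qed
    ultimately show "s' \<in> {s}" using sc by auto
  qed
  then have "S \<subseteq> centr G H s" using s SH unfolding centr_def by auto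
  then have "H \<subseteq> centr G H s" using generate_subgroup_incl[OF _ centr_subgroup[OF H sc]] gen by blast
  then show ?thesis unfolding centr_def by blast
qed

lemma commute_component:
  assumes A: "subgroup A G" and B: "subgroup B G" and comm: "\<forall>a\<in>A. \<forall>b\<in>B. a \<otimes> b = b \<otimes> a"
    and disj: "A \<inter> B = {\<one>}" and a: "a \<in> A" and b: "b \<in> B" and y: "y \<in> A <#> B"
    and yab: "y \<otimes> (a \<otimes> b) = (a \<otimes> b) \<otimes> y"
  shows "y \<otimes> a = a \<otimes> y"
proof -
  obtain a' b' where ab': "a' \<in> A" "b' \<in> B" "y = a' \<otimes> b'"
    using y by (auto simp: mem_set_mult_iff)
  have carr: "a \<in> carrier G" "a' \<in> carrier G" "b \<in> carrier G" "b' \<in> carrier G"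
    using subgroup.mem_carrier[OF A a] subgroup.mem_carrier[OF A ab'(1)]
      subgroup.mem_carrier[OF B b] subgroup.mem_carrier[OF B ab'(2)] by simp_all
  have ba: "b' \<otimes> a = a \<otimes> b'" and ab: "b \<otimes> a' = a' \<otimes> b"
    using comm[rule_format, OF a ab'(2)] comm[rule_format, OF ab'(1) b] by simp_all
  have "(a' \<otimes> a) \<otimes> (b' \<otimes> b) = y \<otimes> (a \<otimes> b)"
    unfolding ab'(3) using m_commute_middle[OF carr(2,4,1,3) ba] by (rule sym)
  also have "\<dots> = (a \<otimes> b) \<otimes> y"
    by (rule yab)
  also have "\<dots> = (a \<otimes> a') \<otimes> (b \<otimes> b')"
    unfolding ab'(3) using m_commute_middle[OF carr(1,3,2,4) ab] .
  finally have "(a' \<otimes> a) \<otimes> (b' \<otimes> b) = (a \<otimes> a') \<otimes> (b \<otimes> b')" .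
  then have aa': "a' \<otimes> a = a \<otimes> a'"
    using set_mult_cancel[OF A B disj subgroup.m_closed[OF A ab'(1) a] subgroup.m_closed[OF A a ab'(1)]
        subgroup.m_closed[OF B ab'(2) b] subgroup.m_closed[OF B b ab'(2)]] by blast
  have "y \<otimes> a = a' \<otimes> (b' \<otimes> a)"
    using ab'(3) carr by (simp add: m_assoc)
  also have "\<dots> = (a' \<otimes> a) \<otimes> b'"
    using ba carr by (simp add: m_assoc)
  also have "\<dots> = a \<otimes> y"
    using aa' ab'(3) carr by (simp add: m_assoc)
  finally show ?thesis .
qed

end

locale centreless_subproduct = plain_group +
  fixes A B Q H H' :: "'a set"
  assumes torsion_free: "torsion_free G"
    and subgroup_A: "subgroup A G" and subgroup_B: "subgroup B G"
    and commute_AB: "\<forall>a\<in>A. \<forall>b\<in>B. a \<otimes> b = b \<otimes> a" and disjoint_AB: "A \<inter> B = {\<one>}"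
    and subgroup_Q: "subgroup Q G" and Q_subset: "Q \<subseteq> A <#> B" and fin_idx_Q: "fin_idx G Q (A <#> B)"
    and centreless: "\<forall>z\<in>Q. (\<forall>q\<in>Q. z \<otimes> q = q \<otimes> z) \<longrightarrow> z = \<one>"
    and subgroup_H: "subgroup H G" and subgroup_H': "subgroup H' G"
    and commute_HH': "\<forall>x\<in>H. \<forall>y\<in>H'. x \<otimes> y = y \<otimes> x" and Q_eq: "Q = H <#> H'"
begin

lemma H_subset_Q: "H \<subseteq> Q"
  using set_mult_left_subset[OF subgroup_H' subgroup.subset[OF subgroup_H]] Q_eq by simp

lemma H'_subset_Q: "H' \<subseteq> Q"
  using set_mult_right_subset[OF subgroup_H subgroup.subset[OF subgroup_H']] Q_eq by simp

lemma swap: "centreless_subproduct G B A Q H H'"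
proof -
  have "A <#> B = B <#> A" using commute_AB by (rule set_mult_commuting)
  moreover have "\<forall>b\<in>B. \<forall>a\<in>A. b \<otimes> a = a \<otimes> b" using commute_AB by auto
  moreover have "B \<inter> A = {\<one>}" using disjoint_AB by auto
  ultimately show ?thesis
    using torsion_free subgroup_A subgroup_B subgroup_Q Q_subset fin_idx_Q centreless subgroup_H
      subgroup_H' commute_HH' Q_eq
    by (intro centreless_subproduct.intro plain_group_axioms centreless_subproduct_axioms.intro) simp_all
qed

lemma H_centreless:
  assumes x: "x \<in> H" and comm: "\<forall>y\<in>H. y \<otimes> x = x \<otimes> y"
  shows "x = \<one>"
proof -
  have "x \<otimes> q = q \<otimes> x" if "q \<in> Q" for q
  proof -
    obtain u v where uv: "u \<in> H" "v \<in> H'" "q = u \<otimes> v"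
      using \<open>q \<in> Q\<close> Q_eq by (auto simp: mem_set_mult_iff)
    have "x \<otimes> u = u \<otimes> x" using comm uv(1) by simp
    moreover have "x \<otimes> v = v \<otimes> x" using commute_HH' uv(2) x by simp
    ultimately show ?thesis
      using uv subgroup.mem_carrier[OF subgroup_H] subgroup.mem_carrier[OF subgroup_H'] x
      by (simp add: commute_mult)
  qed
  then show ?thesis using centreless x H_subset_Q by blast
qed

lemma mem_H_if_commute_H':
  assumes g: "g \<in> Q" and comm: "\<forall>y\<in>H'. y \<otimes> g = g \<otimes> y"
  shows "g \<in> H"
proof -
  obtain h h' where hh: "h \<in> H" "h' \<in> H'" "g = h \<otimes> h'"
    using g Q_eq by (auto simp: mem_set_mult_iff)
  have hc: "h \<in> carrier G" "h' \<in> carrier G"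
    using subgroup.mem_carrier[OF subgroup_H hh(1)] subgroup.mem_carrier[OF subgroup_H' hh(2)] .
  have "h' \<otimes> q = q \<otimes> h'" if q: "q \<in> Q" for q
  proof -
    obtain u v where uv: "u \<in> H" "v \<in> H'" "q = u \<otimes> v"
      using q Q_eq by (auto simp: mem_set_mult_iff)
    have uvc: "u \<in> carrier G" "v \<in> carrier G"
      using subgroup.mem_carrier[OF subgroup_H uv(1)] subgroup.mem_carrier[OF subgroup_H' uv(2)] .
    have "v \<otimes> h' = h' \<otimes> v"
      using commute_mult_cancel[OF uvc(2) hc] comm uv(2) hh(3) commute_HH'[rule_format, OF hh(1) uv(2)]
      by simp
    moreover have "h' \<otimes> u = u \<otimes> h'"
      using commute_HH'[rule_format, OF uv(1) hh(2)] by simp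
    ultimately show ?thesis
      using uv(3) uvc hc by (simp add: commute_mult)
  qed
  then have "h' = \<one>"
    using centreless hh(2) H'_subset_Q by blast
  then show "g \<in> H"
    using hh hc by simp
qed

text \<open>Since \<open>Q\<close> has finite index, some power \<open>a\<^sup>m\<close> lies in \<open>Q\<close>. Elements of \<open>A \<times> B\<close> commuting
  with \<open>s = ab\<close> commute with \<open>a\<close>; those of \<open>H'\<close> do, so \<open>a\<^sup>m\<close> lies in \<open>H\<close>.\<close>

lemma component_pow_mem:
  assumes s: "s \<in> H" and a: "a \<in> A" and b: "b \<in> B" and sab: "s = a \<otimes> b"
  shows "\<exists>m::nat. 0 < m \<and> a [^] m \<in> H \<and> centr G H s \<subseteq> centr G H (a [^] m)"
proof -
  have AB: "subgroup (A <#> B) G"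
    using subgroup_A subgroup_B commute_AB by (rule subgroup_set_mult_commuting)
  have "a \<in> A <#> B"
    using set_mult_left_subset[OF subgroup_B subgroup.subset[OF subgroup_A]] a by blast
  then obtain m :: nat where m: "0 < m" "a [^] m \<in> Q"
    using fin_idx_pow_mem[OF subgroup_Q AB fin_idx_Q] by blast
  have commute_pow: "y \<otimes> a [^] m = a [^] m \<otimes> y" if y: "y \<in> A <#> B" "y \<otimes> s = s \<otimes> y" for y
  proof -
    have "y \<otimes> a = a \<otimes> y"
      using commute_component[OF subgroup_A subgroup_B commute_AB disjoint_AB a b y(1)] y(2) sab by simp
    then show ?thesis
      using group_commutes_pow[of a y m] subgroup.mem_carrier[OF subgroup_A a]
        subgroup.mem_carrier[OF AB y(1)] by simp
  qed
  have "y \<otimes> a [^] m = a [^] m \<otimes> y" if y: "y \<in> H'" for y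
  proof (rule commute_pow)
    show "y \<in> A <#> B" using y H'_subset_Q Q_subset by blast
    show "y \<otimes> s = s \<otimes> y" using commute_HH'[rule_format, OF s y] by simp
  qed
  then have "a [^] m \<in> H"
    using mem_H_if_commute_H' m(2) by blast
  moreover have "centr G H s \<subseteq> centr G H (a [^] m)"
    using commute_pow H_subset_Q Q_subset unfolding centr_def by auto
  ultimately show ?thesis using m(1) by blast
qed

lemma exists_pow_mem:
  assumes C: "subgroup C G" "H \<inter> A \<subseteq> C" "H \<inter> B \<subseteq> C" and x: "x \<in> H"
  shows "\<exists>k::nat. 0 < k \<and> x [^] k \<in> C"
proof -
  obtain a b where ab: "a \<in> A" "b \<in> B" "x = a \<otimes> b"
    using x H_subset_Q Q_subset by (blast elim: mem_set_mult_iff[THEN iffD1, elim_format])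
  have abc: "a \<in> carrier G" "b \<in> carrier G"
    using subgroup.mem_carrier[OF subgroup_A ab(1)] subgroup.mem_carrier[OF subgroup_B ab(2)] .
  have ba: "a \<otimes> b = b \<otimes> a" using commute_AB ab(1,2) by blast
  obtain m :: nat where m: "0 < m" "a [^] m \<in> H"
    using component_pow_mem[OF x ab] by blast
  obtain n :: nat where n: "0 < n" "b [^] n \<in> H"
    using centreless_subproduct.component_pow_mem[OF swap x ab(2,1)] ab(3) ba by auto
  have "(a [^] m) [^] n \<in> C" "(b [^] n) [^] m \<in> C"
    using C m(2) n(2) subgroup_nat_pow_closed[OF subgroup_A ab(1)] subgroup_nat_pow_closed[OF subgroup_B ab(2)]
    by (blast intro: subgroup_nat_pow_closed[OF C(1)])+
  then have "x [^] (m * n) \<in> C"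
    using subgroup.m_closed[OF C(1)] ab(3) ba abc
    by (simp add: pow_mult_distrib nat_pow_pow mult.commute[of n m])
  then show ?thesis using m(1) n(1) by (intro exI[of _ "m * n"]) simp
qed

text \<open>Maximality of centralisers turns \<open>C\<^sub>H(s) \<subseteq> C\<^sub>H(a\<^sup>m)\<close> into an equality, and \<open>a\<^sup>m \<in> A\<close>
  centralises \<open>H \<inter> B\<close>; symmetrically for \<open>b\<^sup>n\<close>.\<close>

lemma IMC_generator_centr_components:
  assumes S: "IMC_gen_set G H S" and s: "s \<in> S" and a: "a \<in> A" "a \<noteq> \<one>" and b: "b \<in> B" "b \<noteq> \<one>"
    and sab: "s = a \<otimes> b"
  shows "H \<inter> A \<subseteq> centr G H s" "H \<inter> B \<subseteq> centr G H s"
proof -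
  have sH: "s \<in> H" using s S unfolding IMC_gen_set_def by blast
  have maximal: "centr G H s = centr G H (x [^] m)"
    if "0 < m" "x \<in> carrier G" "x \<noteq> \<one>" "x [^] m \<in> H" "centr G H s \<subseteq> centr G H (x [^] m)"
    for x and m :: nat
  proof -
    have "x [^] m \<noteq> \<one>" using torsion_free_pow_eq_one_iff[OF torsion_free that(2,1)] that(3) by simp
    then show ?thesis using S s that(4,5) unfolding IMC_gen_set_def by blast
  qed
  obtain m :: nat where m: "0 < m" "a [^] m \<in> H" "centr G H s \<subseteq> centr G H (a [^] m)"
    using component_pow_mem[OF sH a(1) b(1) sab] by blast
  have "a \<otimes> b = b \<otimes> a" using commute_AB a(1) b(1) by blast
  then obtain n :: nat where n: "0 < n" "b [^] n \<in> H" "centr G H s \<subseteq> centr G H (b [^] n)"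
    using centreless_subproduct.component_pow_mem[OF swap sH b(1) a(1)] sab by auto
  have "H \<inter> A \<subseteq> centr G H (b [^] n)"
    using commute_AB subgroup_nat_pow_closed[OF subgroup_B b(1)] unfolding centr_def by blast
  then show "H \<inter> A \<subseteq> centr G H s"
    using maximal[OF n(1) subgroup.mem_carrier[OF subgroup_B b(1)] b(2) n(2,3)] by simp
  have "H \<inter> B \<subseteq> centr G H (a [^] m)"
    using commute_AB subgroup_nat_pow_closed[OF subgroup_A a(1)] unfolding centr_def by force
  then show "H \<inter> B \<subseteq> centr G H s"
    using maximal[OF m(1) subgroup.mem_carrier[OF subgroup_A a(1)] a(2) m(2,3)] by simp
qed

lemma IMC_generator_component_trivial:
  assumes S: "IMC_gen_set G H S" and s: "s \<in> S"
    and a: "a \<in> A" and b: "b \<in> B" and sab: "s = a \<otimes> b"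
  shows "a = \<one> \<or> b = \<one>"
proof (rule ccontr)
  assume "\<not> (a = \<one> \<or> b = \<one>)"
  then have a1: "a \<noteq> \<one>" and b1: "b \<noteq> \<one>" by auto
  have SH: "S \<subseteq> H" using S unfolding IMC_gen_set_def by blast
  have sH: "s \<in> H" using s SH by blast
  have C: "subgroup (centr G H s) G"
    using centr_subgroup[OF subgroup_H subgroup.mem_carrier[OF subgroup_H sH]] .
  have "\<forall>s'\<in>S. \<exists>k::nat. 0 < k \<and> s' [^] k \<otimes> s = s \<otimes> s' [^] k"
  proof
    fix s' assume "s' \<in> S"
    then obtain k :: nat where "0 < k" "s' [^] k \<in> centr G H s"
      using exists_pow_mem[OF C IMC_generator_centr_components[OF S s a a1 b b1 sab]] SH by blast
    then show "\<exists>k::nat. 0 < k \<and> s' [^] k \<otimes> s = s \<otimes> s' [^] k"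
      unfolding centr_def by blast
  qed
  then have "s = \<one>"
    using H_centreless[OF sH] IMC_generator_central[OF S subgroup_H s] by blast
  then have "\<one> \<otimes> \<one> = a \<otimes> b" using sab by simp
  then have "\<one> = a"
    using set_mult_cancel[OF subgroup_A subgroup_B disjoint_AB subgroup.one_closed[OF subgroup_A] a
        subgroup.one_closed[OF subgroup_B] b] by blast
  then show False using a1 by simp
qed

lemma IMC_gen_set_subset:
  assumes S: "IMC_gen_set G H S"
  shows "H \<subseteq> A \<or> H \<subseteq> B"
proof (rule ccontr)
  have SH: "S \<subseteq> H" and gen: "generate G S = H"
    and indep: "\<forall>s1\<in>S. \<forall>s2\<in>S. s1 \<noteq> s2 \<longrightarrow> (\<forall>(p::nat) (q::nat). p \<ge> 1 \<and> q \<ge> 1 \<longrightarrow>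
        s1 [^] p \<otimes> s2 [^] q \<noteq> s2 [^] q \<otimes> s1 [^] p)"
    using S unfolding IMC_gen_set_def by blast+
  have A_or_B: "s \<in> A \<or> s \<in> B" if s: "s \<in> S" for s
  proof -
    obtain a b where ab: "a \<in> A" "b \<in> B" "s = a \<otimes> b"
      using s SH H_subset_Q Q_subset by (blast elim: mem_set_mult_iff[THEN iffD1, elim_format])
    then show ?thesis
      using IMC_generator_component_trivial[OF S s ab] subgroup.mem_carrier[OF subgroup_A ab(1)]
        subgroup.mem_carrier[OF subgroup_B ab(2)] by auto
  qed
  assume "\<not> (H \<subseteq> A \<or> H \<subseteq> B)"
  then have "\<not> S \<subseteq> A" "\<not> S \<subseteq> B"
    using gen generate_subgroup_incl[OF _ subgroup_A] generate_subgroup_incl[OF _ subgroup_B] by auto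
  then obtain s1 s2 where s1: "s1 \<in> S" "s1 \<notin> A" and s2: "s2 \<in> S" "s2 \<notin> B" by blast
  then have "s1 \<in> B" "s2 \<in> A" using A_or_B by blast+
  then have "s1 [^] (1::nat) \<otimes> s2 [^] (1::nat) = s2 [^] (1::nat) \<otimes> s1 [^] (1::nat)"
    using commute_AB subgroup.mem_carrier[OF subgroup_A] subgroup.mem_carrier[OF subgroup_B] by simp
  moreover have "s1 \<noteq> s2" using s1(2) \<open>s2 \<in> A\<close> by blast
  ultimately show False using indep s1(1) s2(1) by blast
qed

lemma not_infinite_cyclic: "\<not> infinite_cyclic G H"
proof
  assume "infinite_cyclic G H"
  then obtain x where x: "x \<in> H" "H = generate G {x}" and inf: "infinite H"
    unfolding infinite_cyclic_def by blast
  have xc: "x \<in> carrier G" using subgroup.mem_carrier[OF subgroup_H x(1)] .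
  have "{x} \<subseteq> centr G H x" using x(1) unfolding centr_def by simp
  then have "H \<subseteq> centr G H x"
    using x(2) generate_subgroup_incl[OF _ centr_subgroup[OF subgroup_H xc]] by simp
  then have "x = \<one>" using H_centreless[OF x(1)] unfolding centr_def by blast
  then have "H \<subseteq> {\<one>}" using x(2) generate_subgroup_incl[OF _ triv_subgroup] by simp
  then show False using inf finite_subset by blast
qed

lemma direct_factor_subset:
  assumes "infinite_cyclic G H \<or> (\<exists>S. IMC_gen_set G H S)"
  shows "H \<subseteq> A \<or> H \<subseteq> B"
  using assms not_infinite_cyclic IMC_gen_set_subset by blast

end

context plain_group
begin

lemma direct_factor_subset_or_commute:
  assumes tf: "torsion_free G" and Ps: "int_dprod G Ps P" and Z: "Z \<in> set Ps"
    and Q: "int_dprod G Qs Q" and QP: "Q \<subseteq> P" and fin: "fin_idx G Q P"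
    and centreless: "\<forall>z\<in>Q. (\<forall>q\<in>Q. z \<otimes> q = q \<otimes> z) \<longrightarrow> z = \<one>"
    and Y: "Y \<in> set Qs" and Y_kind: "infinite_cyclic G Y \<or> (\<exists>S. IMC_gen_set G Y S)"
  shows "Y \<subseteq> Z \<or> (\<forall>y\<in>Y. \<forall>z\<in>Z. y \<otimes> z = z \<otimes> y)"
proof -
  obtain Y' where Y': "subgroup Y' G" "\<forall>y\<in>Y. \<forall>y'\<in>Y'. y \<otimes> y' = y' \<otimes> y" "Q = Y <#> Y'"
    using int_dprod_complement[OF Q Y] by blast
  obtain Z' where Z': "subgroup Z' G" "\<forall>z\<in>Z. \<forall>z'\<in>Z'. z \<otimes> z' = z' \<otimes> z" "Z \<inter> Z' = {\<one>}"
    "P = Z <#> Z'"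
    using int_dprod_complement[OF Ps Z] by blast
  have "subgroup Z G" using int_dprod_subgroup[OF Ps] Z by blast
  moreover have "subgroup Q G" "subgroup Y G" using int_dprod_subgroup[OF Q] Y by auto
  moreover have "Q \<subseteq> Z <#> Z'" "fin_idx G Q (Z <#> Z')"
    using QP fin Z'(4) by simp_all
  ultimately interpret centreless_subproduct G Z Z' Q Y Y'
    using tf Z'(1-3) centreless Y'
    by (intro centreless_subproduct.intro plain_group_axioms centreless_subproduct_axioms.intro)
      assumption+
  show ?thesis using direct_factor_subset[OF Y_kind] Z'(2) by (metis subsetD)
qed

lemma direct_factor_subset_factor:
  assumes tf: "torsion_free G" and Ps: "int_dprod G Ps P" and Ps_nonempty: "Ps \<noteq> []"
    and Q: "int_dprod G Qs Q" and QP: "Q \<subseteq> P" and fin: "fin_idx G Q P"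
    and centreless: "\<forall>z\<in>Q. (\<forall>q\<in>Q. z \<otimes> q = q \<otimes> z) \<longrightarrow> z = \<one>"
    and Y: "Y \<in> set Qs" and Y_kind: "infinite_cyclic G Y \<or> (\<exists>S. IMC_gen_set G Y S)"
  shows "\<exists>Z\<in>set Ps. Y \<subseteq> Z"
proof (rule ccontr)
  assume "\<not> (\<exists>Z\<in>set Ps. Y \<subseteq> Z)"
  then have commute: "\<forall>Z\<in>set Ps. \<forall>y\<in>Y. \<forall>z\<in>Z. y \<otimes> z = z \<otimes> y"
    using direct_factor_subset_or_commute[OF tf Ps _ Q QP fin centreless Y Y_kind] by blast
  have sY: "subgroup Y G" and YQ: "Y \<subseteq> Q" using int_dprod_subgroup[OF Q] Y by auto
  have "y = \<one>" if y: "y \<in> Y" for y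
  proof -
    have yc: "y \<in> carrier G" using subgroup.mem_carrier[OF sY y] .
    have "\<forall>Z\<in>set Ps. Z \<subseteq> centr G (carrier G) y"
      using commute y int_dprod_subgroup[OF Ps] subgroup.subset unfolding centr_def by fastforce
    then have "P \<subseteq> centr G (carrier G) y"
      using int_dprod_least[OF Ps centr_subgroup[OF subgroup_self yc]] by blast
    then have "\<forall>q\<in>Q. y \<otimes> q = q \<otimes> y"
      using QP unfolding centr_def by auto
    then show ?thesis
      using centreless y YQ by blast
  qed
  moreover have "hd Ps \<in> set Ps" using Ps_nonempty by simp
  moreover have "\<one> \<in> hd Ps"
    using int_dprod_subgroup[OF Ps] subgroup.one_closed calculation(2) by blast
  ultimately show False
    using \<open>\<not> (\<exists>Z\<in>set Ps. Y \<subseteq> Z)\<close> by blast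
qed

end

theorem proposition5p2:
  fixes G :: "'a monoid" and G1 :: "'a set"
  assumes grp: "group G"
    and tf2: "torsion_free G"
    and tf1: "torsion_free (G\<lparr>carrier := G1\<rparr>)"
    and sub: "subgroup G1 G"
    and fi: "fin_idx G G1 (carrier G)"
    and i1: "\<forall>K. subgroup K G \<and> K \<subseteq> G1 \<and> commens_prod_inf G K \<longrightarrow>
               (\<exists>Q. max_prod_subgroup G G1 Q \<and> K \<subseteq> Q)"
    and i2: "\<forall>K. subgroup K G \<and> commens_prod_inf G K \<longrightarrow>
               (\<exists>Q. max_prod_subgroup G (carrier G) Q \<and> K \<subseteq> Q)"
    and ii: "\<forall>Q. max_prod_subgroup G G1 Q \<longrightarrow>
               (\<exists>Qs. int_dprod G Qs Q \<and> (\<forall>Qi\<in>set Qs. infinite_cyclic G Qi \<or> (\<exists>S. IMC_gen_set G Qi S)))"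
    and iii: "\<forall>P1 P2. max_prod_subgroup G (carrier G) P1 \<and> max_prod_subgroup G (carrier G) P2
               \<and> fin_idx G (P1 \<inter> P2) P1 \<longrightarrow> P1 = P2"
    and iv: "almost_stable_centralisers G"
    and P: "max_prod_subgroup G (carrier G) P"
    and Ps: "int_dprod G Ps P"
    and VZ: "virtual_centre G P = {\<one>\<^bsub>G\<^esub>}"
    and nv: "\<forall>Pi\<in>set Ps. \<not> virt_prod_inf G Pi"
  shows "\<exists>R Rs. max_prod_subgroup G G1 R \<and> int_dprod G Rs R \<and> length Rs = length Ps \<and>
           (\<forall>i < length Ps. subgroup (Rs ! i) G \<and> Rs ! i \<subseteq> Ps ! i \<and> fin_idx G (Rs ! i) (Ps ! i))"
proof -
  interpret plain_group G using grp by (rule plain_group.intro)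
  obtain Q where Q: "max_prod_subgroup G G1 Q" "Q \<subseteq> P" "fin_idx G Q P"
    using exists_fin_idx_max_prod_subgroup[OF tf2 sub fi i1 i2 iii P] by blast
  have sQ: "subgroup Q G"
    using Q(1) unfolding max_prod_subgroup_def product_subgroup_def by blast
  have centreless: "\<forall>z\<in>Q. (\<forall>q\<in>Q. z \<otimes>\<^bsub>G\<^esub> q = q \<otimes>\<^bsub>G\<^esub> z) \<longrightarrow> z = \<one>\<^bsub>G\<^esub>"
    using VZ Q(2,3) sQ unfolding virtual_centre_def by blast
  obtain Qs where Qs: "int_dprod G Qs Q" "\<forall>Y\<in>set Qs. infinite_cyclic G Y \<or> (\<exists>S. IMC_gen_set G Y S)"
    using ii Q(1) by blast
  have "Ps \<noteq> []"
    using Ps P product_subgroup_nontrivial by (auto simp: max_prod_subgroup_def)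
  then have "\<forall>Y\<in>set Qs. \<exists>Z\<in>set Ps. Y \<subseteq> Z"
    using direct_factor_subset_factor[OF tf2 Ps _ Qs(1) Q(2,3) centreless] Qs(2) by blast
  then have R: "int_dprod G (map (\<lambda>Z. Q \<inter> Z) Ps) Q"
    using int_dprod_Int_factors[OF Ps Qs(1) Q(2)] by blast
  have "subgroup (Q \<inter> Z) G \<and> fin_idx G (Q \<inter> Z) Z" if "Z \<in> set Ps" for Z
    using int_dprod_subgroup[OF Ps] that subgroups_Inter_pair[OF sQ] fin_idx_Int[OF sQ _ _ Q(3)] by blast
  then show ?thesis
    using Q(1) R by (intro exI[of _ Q] exI[of _ "map (\<lambda>Z. Q \<inter> Z) Ps"]) auto
qed

end
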